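(* Assume the bounded-feature assumption: there is $\Phi>0$ with $\|\phi_{y,x}\|\le\Phi$ for all inputs $x$ and outputs $y$. Consider the alternating procedure (ALRIGHT) described in the context, run for $T$ iterations with constant step size $\alpha_t=\alpha_0/\sqrt{T}$ for all $t\in\{1,\dots,T\}$, where $\alpha_0>0$. Then for any $\lambda\in[0,1]$ its output $\hat\theta_{\mathrm{AL}}=\theta_T$ satisfies $$\mathbb{E}\Big[\lambda f_{\mathrm{DPO}}(\hat\theta_{\mathrm{AL}})+(1-\lambda)f_{\mathrm{SFT}}(\hat\theta_{\mathrm{AL}})-\min_{\theta\in\Theta}\big(\lambda f_{\mathrm{DPO}}(\theta)+(1-\lambda)f_{\mathrm{SFT}}(\theta)\big)\Big]=\mathcal{O}\Big(\frac{\log T}{\sqrt T}\Big),$$ where the expectation is over the randomness of the procedure.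
   Context: Parameter set $\Theta\subseteq\mathbb{R}^d$ is a nonempty closed convex set on which the minimum above is attained, and $\Pi_\Theta$ is Euclidean projection onto it. Policy model: for a finite output set $\mathcal{Y}$, $\pi_\theta(y\mid x)=\exp(\theta^\top\phi_{y,x})/\sum_{y'\in\mathcal{Y}}\exp(\theta^\top\phi_{y',x})$ with feature vectors $\phi_{y,x}\in\mathbb{R}^d$; the reference policy is $\pi_{\mathrm{ref}}=\pi_{\theta_{\mathrm{ref}}}$ for a fixed $\theta_{\mathrm{ref}}$. Datasets: $\mathcal{D}_{\mathrm{DPO}}=\{(x^{(i)},y_w^{(i)},y_\ell^{(i)})\}_{i=1}^{N_1}$ (input, preferred, dispreferred response) and $\mathcal{D}_{\mathrm{SFT}}=\{(x^{(i)},y^{(i)})\}_{i=1}^{N_2}$. With $\sigma$ the sigmoid and $\beta>0$, $h_\beta(\theta;x,y_w,y_\ell)=\beta\log\frac{\pi_\theta(y_w|x)}{\pi_{\mathrm{ref}}(y_w|x)}-\beta\log\frac{\pi_\theta(y_\ell|x)}{\pi_{\mathrm{ref}}(y_\ell|x)}$, $f_{\mathrm{DPO}}(\theta)=-\frac1{N_1}\sum_{\mathcal{D}_{\mathrm{DPO}}}\log\sigma(h_\beta(\theta;x,y_w,y_\ell))$, $f_{\mathrm{SFT}}(\theta)=-\frac1{N_2}\sum_{\mathcal{D}_{\mathrm{SFT}}}\log\pi_\theta(y|x)$, $g_{\mathrm{DPO}}(\theta;x,y_w,y_\ell)=-(1-\sigma(h_\beta))\nabla_\theta h_\beta(\theta;x,y_w,y_\ell)$,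 $g_{\mathrm{SFT}}(\theta;x,y)=-\nabla_\theta\pi_\theta(y|x)/\pi_\theta(y|x)$. ALRIGHT (inputs: datasets, step sizes $\{\alpha_t\}$, $\lambda\in[0,1]$, initialization $\theta_1\in\Theta$): for $t=1,\dots,T-1$, sample $i_t\sim\mathrm{Bernoulli}(\lambda)$; if $i_t=1$, sample $(x^t,y_w^t,y_\ell^t)$ uniformly from $\mathcal{D}_{\mathrm{DPO}}$ and set $\theta_{t+1}=\Pi_\Theta(\theta_t-\alpha_tg_{\mathrm{DPO}}(\theta_t;x^t,y_w^t,y_\ell^t))$; otherwise sample $(x^t,y^t)$ uniformly from $\mathcal{D}_{\mathrm{SFT}}$ and set $\theta_{t+1}=\Pi_\Theta(\theta_t-\alpha_tg_{\mathrm{SFT}}(\theta_t;x^t,y^t))$. Output $\theta_T$. *)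

theory Defs
  imports "HOL-Analysis.Analysis" "HOL-Probability.Probability" "HOL-Library.Landau_Symbols"
begin

definition grad :: "('a::euclidean_space \<Rightarrow> real) \<Rightarrow> 'a \<Rightarrow> 'a" where
  "grad f \<theta> = (THE g. (f has_derivative (\<lambda>h. g \<bullet> h)) (at \<theta>))"

definition sigmoid :: "real \<Rightarrow> real" where
  "sigmoid z = 1 / (1 + exp (- z))"

definition policy :: "('y::finite \<Rightarrow> 'x \<Rightarrow> 'a::euclidean_space) \<Rightarrow> 'a \<Rightarrow> 'y \<Rightarrow> 'x \<Rightarrow> real" where
  "policy \<phi> \<theta> y x = exp (\<theta> \<bullet> \<phi> y x) / (\<Sum>y'\<in>UNIV. exp (\<theta> \<bullet> \<phi> y' x))"

definition h_beta :: "('y::finite \<Rightarrow> 'x \<Rightarrow> 'a::euclidean_space) \<Rightarrow> 'a \<Rightarrow> real \<Rightarrow> 'a \<Rightarrow> 'x \<Rightarrow> 'y \<Rightarrow> 'y \<Rightarrow> real" where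
  "h_beta \<phi> \<theta>ref \<beta> \<theta> x yw yl =
     \<beta> * ln (policy \<phi> \<theta> yw x / policy \<phi> \<theta>ref yw x)
   - \<beta> * ln (policy \<phi> \<theta> yl x / policy \<phi> \<theta>ref yl x)"

definition f_DPO :: "('y::finite \<Rightarrow> 'x \<Rightarrow> 'a::euclidean_space) \<Rightarrow> 'a \<Rightarrow> real \<Rightarrow> ('x \<times> 'y \<times> 'y) list \<Rightarrow> 'a \<Rightarrow> real" where
  "f_DPO \<phi> \<theta>ref \<beta> D \<theta> =
     - (1 / real (length D)) * (\<Sum>i<length D. case D ! i of (x, yw, yl) \<Rightarrow>
          ln (sigmoid (h_beta \<phi> \<theta>ref \<beta> \<theta> x yw yl)))"

definition f_SFT :: "('y::finite \<Rightarrow> 'x \<Rightarrow> 'a::euclidean_space) \<Rightarrow> ('x \<times> 'y) list \<Rightarrow> 'a \<Rightarrow> real" where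
  "f_SFT \<phi> D \<theta> =
     - (1 / real (length D)) * (\<Sum>i<length D. case D ! i of (x, y) \<Rightarrow> ln (policy \<phi> \<theta> y x))"

definition g_DPO :: "('y::finite \<Rightarrow> 'x \<Rightarrow> 'a::euclidean_space) \<Rightarrow> 'a \<Rightarrow> real \<Rightarrow> 'a \<Rightarrow> 'x \<Rightarrow> 'y \<Rightarrow> 'y \<Rightarrow> 'a" where
  "g_DPO \<phi> \<theta>ref \<beta> \<theta> x yw yl =
     - ((1 - sigmoid (h_beta \<phi> \<theta>ref \<beta> \<theta> x yw yl))
          *\<^sub>R grad (\<lambda>t. h_beta \<phi> \<theta>ref \<beta> t x yw yl) \<theta>)"

definition g_SFT :: "('y::finite \<Rightarrow> 'x \<Rightarrow> 'a::euclidean_space) \<Rightarrow> 'a \<Rightarrow> 'x \<Rightarrow> 'y \<Rightarrow> 'a" where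
  "g_SFT \<phi> \<theta> x y = - ((1 / policy \<phi> \<theta> y x) *\<^sub>R grad (\<lambda>t. policy \<phi> t y x) \<theta>)"

definition alright_step ::
  "('y::finite \<Rightarrow> 'x \<Rightarrow> 'a::euclidean_space) \<Rightarrow> 'a \<Rightarrow> real \<Rightarrow> 'a set
   \<Rightarrow> ('x \<times> 'y \<times> 'y) list \<Rightarrow> ('x \<times> 'y) list \<Rightarrow> real \<Rightarrow> real \<Rightarrow> 'a \<Rightarrow> 'a pmf" where
  "alright_step \<phi> \<theta>ref \<beta> \<Theta> D1 D2 lam \<alpha> \<theta> =
     bind_pmf (bernoulli_pmf lam) (\<lambda>i.
       if i then
         map_pmf (\<lambda>k. case D1 ! k of (x, yw, yl) \<Rightarrow>
                        closest_point \<Theta> (\<theta> - \<alpha> *\<^sub>R g_DPO \<phi> \<theta>ref \<beta> \<theta> x yw yl))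
                 (pmf_of_set {..<length D1})
       else
         map_pmf (\<lambda>k. case D2 ! k of (x, y) \<Rightarrow>
                        closest_point \<Theta> (\<theta> - \<alpha> *\<^sub>R g_SFT \<phi> \<theta> x y))
                 (pmf_of_set {..<length D2}))"

fun alright_iter ::
  "('y::finite \<Rightarrow> 'x \<Rightarrow> 'a::euclidean_space) \<Rightarrow> 'a \<Rightarrow> real \<Rightarrow> 'a set
   \<Rightarrow> ('x \<times> 'y \<times> 'y) list \<Rightarrow> ('x \<times> 'y) list \<Rightarrow> real \<Rightarrow> real \<Rightarrow> nat \<Rightarrow> 'a \<Rightarrow> 'a pmf" where
  "alright_iter \<phi> \<theta>ref \<beta> \<Theta> D1 D2 lam \<alpha> 0 \<theta> = return_pmf \<theta>"
| "alright_iter \<phi> \<theta>ref \<beta> \<Theta> D1 D2 lam \<alpha> (Suc n) \<theta> =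
     bind_pmf (alright_step \<phi> \<theta>ref \<beta> \<Theta> D1 D2 lam \<alpha> \<theta>)
              (alright_iter \<phi> \<theta>ref \<beta> \<Theta> D1 D2 lam \<alpha> n)"

text \<open>Output theta_T of ALRIGHT run with T iterations (t = 1..T-1 updates),
  constant step size alpha_t = alpha0 / sqrt T, starting from theta1.\<close>
definition alright_output ::
  "('y::finite \<Rightarrow> 'x \<Rightarrow> 'a::euclidean_space) \<Rightarrow> 'a \<Rightarrow> real \<Rightarrow> 'a set
   \<Rightarrow> ('x \<times> 'y \<times> 'y) list \<Rightarrow> ('x \<times> 'y) list \<Rightarrow> real \<Rightarrow> real \<Rightarrow> 'a \<Rightarrow> nat \<Rightarrow> 'a pmf" where
  "alright_output \<phi> \<theta>ref \<beta> \<Theta> D1 D2 lam \<alpha>0 \<theta>1 T =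
     alright_iter \<phi> \<theta>ref \<beta> \<Theta> D1 D2 lam (\<alpha>0 / sqrt (real T)) (T - 1) \<theta>1"

end

theory Submission
  imports Defs
begin

text \<open>ALRIGHT is projected stochastic gradient descent on
  F = \<lambda> f_DPO + (1 - \<lambda>) f_SFT. For the softmax policy both per-sample losses are convex in \<theta>
  (minus the log-sigmoid of a linear function, and a log-partition function minus a linear one),
  and their stochastic gradients are bounded by G = 2 \<Phi> max 1 \<beta>. Since the projection onto \<Theta> is
  nonexpansive, one step satisfies
  E |\<theta>' - u|^2 \<le> |\<theta> - u|^2 - 2 \<eta> (F \<theta> - F u) + \<eta>^2 G^2 for every u \<in> \<Theta>.
  Summing this bounds the average of E F \<theta>_i - F u over the first n iterates by
  |\<theta>_1 - u|^2 / (2 \<eta> n) + \<eta> G^2 / 2. Applied to the chain restarted at \<theta>_s with u = \<theta>_s, it bounds how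
  far the average of a suffix can exceed its first term, and the averaging argument of Shamir and Zhang
  turns this into a bound for the last iterate at the price of a factor 1 + H_(T-1) \<le> 2 + ln T.
  With \<eta> = \<alpha>0 / sqrt T both terms are O(ln T / sqrt T).\<close>

lemma grad_eqI:
  assumes "(f has_derivative (\<lambda>h. g \<bullet> h)) (at \<theta>)"
  shows "grad f \<theta> = g"
  unfolding grad_def
proof (rule the_equality)
  fix g' assume "(f has_derivative (\<lambda>h. g' \<bullet> h)) (at \<theta>)"
  then have "(\<lambda>h. g' \<bullet> h) = (\<lambda>h. g \<bullet> h)"
    using assms by (rule has_derivative_unique)
  then have "(g' - g) \<bullet> (g' - g) = 0"
    by (metis inner_diff_left right_minus_eq)
  then show "g' = g" by simp
qed (fact assms)

section \<open>Gradients and convexity of the DPO and SFT losses\<close>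

definition softmax_denom :: "('y::finite \<Rightarrow> 'x \<Rightarrow> 'a::euclidean_space) \<Rightarrow> 'a \<Rightarrow> 'x \<Rightarrow> real" where
  "softmax_denom \<phi> \<theta> x = (\<Sum>y\<in>UNIV. exp (\<theta> \<bullet> \<phi> y x))"

definition mean_feature :: "('y::finite \<Rightarrow> 'x \<Rightarrow> 'a::euclidean_space) \<Rightarrow> 'a \<Rightarrow> 'x \<Rightarrow> 'a" where
  "mean_feature \<phi> \<theta> x = (\<Sum>y\<in>UNIV. policy \<phi> \<theta> y x *\<^sub>R \<phi> y x)"

lemma softmax_denom_pos: "softmax_denom \<phi> \<theta> x > 0"
  unfolding softmax_denom_def by (intro sum_pos) auto

lemma policy_eq: "policy \<phi> \<theta> y x = exp (\<theta> \<bullet> \<phi> y x) / softmax_denom \<phi> \<theta> x"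
  unfolding policy_def softmax_denom_def ..

lemma policy_pos: "policy \<phi> \<theta> y x > 0"
  unfolding policy_eq using softmax_denom_pos[of \<phi> \<theta> x] by simp

lemma sum_policy: "(\<Sum>y\<in>UNIV. policy \<phi> \<theta> y x) = 1"
  unfolding policy_eq sum_divide_distrib[symmetric] using softmax_denom_pos[of \<phi> \<theta> x]
  by (simp add: softmax_denom_def)

lemma ln_policy: "ln (policy \<phi> \<theta> y x) = \<theta> \<bullet> \<phi> y x - ln (softmax_denom \<phi> \<theta> x)"
  unfolding policy_eq using softmax_denom_pos[of \<phi> \<theta> x] by (simp add: ln_div)

lemma h_beta_eq: "h_beta \<phi> \<theta>ref \<beta> \<theta> x yw yl = \<beta> * ((\<theta> - \<theta>ref) \<bullet> (\<phi> yw x - \<phi> yl x))"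
proof -
  have ln_ratio: "ln (policy \<phi> \<theta> y x / policy \<phi> \<theta>ref y x)
      = (\<theta> - \<theta>ref) \<bullet> \<phi> y x - ln (softmax_denom \<phi> \<theta> x) + ln (softmax_denom \<phi> \<theta>ref x)" for y
    using policy_pos[of \<phi> \<theta> y x] policy_pos[of \<phi> \<theta>ref y x]
    by (simp add: ln_div ln_policy inner_diff_left)
  show ?thesis
    unfolding h_beta_def ln_ratio by (simp add: inner_diff_right algebra_simps)
qed

lemma grad_h_beta: "grad (\<lambda>t. h_beta \<phi> \<theta>ref \<beta> t x yw yl) \<theta> = \<beta> *\<^sub>R (\<phi> yw x - \<phi> yl x)"
  unfolding h_beta_eq
  by (rule grad_eqI) (auto intro!: derivative_eq_intros simp: inner_commute)

lemma grad_policy: "grad (\<lambda>t. policy \<phi> t y x) \<theta> = policy \<phi> \<theta> y x *\<^sub>R (\<phi> y x - mean_feature \<phi> \<theta> x)"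
proof (rule grad_eqI)
  let ?E = "\<lambda>t. exp (t \<bullet> \<phi> y x)" and ?Z = "softmax_denom \<phi>"
  let ?dZ = "\<lambda>h. \<Sum>y'\<in>UNIV. exp (\<theta> \<bullet> \<phi> y' x) * (h \<bullet> \<phi> y' x)"
  have dE: "(?E has_derivative (\<lambda>h. ?E \<theta> * (h \<bullet> \<phi> y x))) (at \<theta>)"
    by (auto intro!: derivative_eq_intros)
  have dZ: "((\<lambda>t. ?Z t x) has_derivative ?dZ) (at \<theta>)"
    unfolding softmax_denom_def by (auto intro!: derivative_eq_intros simp: mult.commute)
  \<comment> \<open>the left-hand side is the derivative in the form delivered by has_derivative_divide\<close>
  have "- ?E \<theta> * (inverse (?Z \<theta> x) * ?dZ h * inverse (?Z \<theta> x)) + ?E \<theta> * (h \<bullet> \<phi> y x) / ?Z \<theta> x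
      = (policy \<phi> \<theta> y x *\<^sub>R (\<phi> y x - mean_feature \<phi> \<theta> x)) \<bullet> h" for h
  proof -
    have "mean_feature \<phi> \<theta> x \<bullet> h = ?dZ h / ?Z \<theta> x"
      unfolding mean_feature_def policy_eq inner_sum_left sum_divide_distrib
      by (intro sum.cong) (auto simp: inner_commute)
    moreover have "(policy \<phi> \<theta> y x *\<^sub>R (\<phi> y x - mean_feature \<phi> \<theta> x)) \<bullet> h
        = policy \<phi> \<theta> y x * (h \<bullet> \<phi> y x) - policy \<phi> \<theta> y x * (mean_feature \<phi> \<theta> x \<bullet> h)"
      by (simp add: inner_diff_left inner_commute algebra_simps)
    ultimately show ?thesis
      using softmax_denom_pos[of \<phi> \<theta> x] by (simp only: policy_eq) (simp add: field_simps)
  qed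
  then show "((\<lambda>t. policy \<phi> t y x) has_derivative
      (\<lambda>h. (policy \<phi> \<theta> y x *\<^sub>R (\<phi> y x - mean_feature \<phi> \<theta> x)) \<bullet> h)) (at \<theta>)"
    using has_derivative_divide[OF dE dZ] softmax_denom_pos[of \<phi> \<theta> x]
    unfolding policy_eq by simp
qed

lemma g_SFT_eq: "g_SFT \<phi> \<theta> x y = mean_feature \<phi> \<theta> x - \<phi> y x"
  unfolding g_SFT_def grad_policy using policy_pos[of \<phi> \<theta> y x] by simp

lemma g_DPO_eq:
  "g_DPO \<phi> \<theta>ref \<beta> \<theta> x yw yl
     = - ((1 - sigmoid (h_beta \<phi> \<theta>ref \<beta> \<theta> x yw yl)) * \<beta>) *\<^sub>R (\<phi> yw x - \<phi> yl x)"
  unfolding g_DPO_def grad_h_beta by simp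

lemma sigmoid_pos: "sigmoid z > 0"
  unfolding sigmoid_def by (simp add: add_pos_pos)

lemma sigmoid_less_1: "sigmoid z < 1"
  unfolding sigmoid_def by (simp add: add_pos_pos divide_less_eq)

lemma norm_mean_feature_le:
  assumes "\<forall>x y. norm (\<phi> y x) \<le> \<Phi>"
  shows "norm (mean_feature \<phi> \<theta> x) \<le> \<Phi>"
proof -
  have "norm (mean_feature \<phi> \<theta> x) \<le> (\<Sum>y\<in>UNIV. norm (policy \<phi> \<theta> y x *\<^sub>R \<phi> y x))"
    unfolding mean_feature_def by (rule norm_sum)
  also have "\<dots> \<le> (\<Sum>y\<in>UNIV. policy \<phi> \<theta> y x * \<Phi>)"
    using assms policy_pos[of \<phi> \<theta> _ x]
    by (intro sum_mono) (auto intro: mult_left_mono less_imp_le simp: abs_of_pos)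
  also have "\<dots> = \<Phi>"
    by (simp add: sum_distrib_right[symmetric] sum_policy)
  finally show ?thesis .
qed

lemma norm_g_SFT_le:
  assumes "\<forall>x y. norm (\<phi> y x) \<le> \<Phi>"
  shows "norm (g_SFT \<phi> \<theta> x y) \<le> 2 * \<Phi>"
  using norm_triangle_ineq4[of "mean_feature \<phi> \<theta> x" "\<phi> y x"] norm_mean_feature_le[OF assms, of \<theta> x]
    assms[rule_format, of y x] unfolding g_SFT_eq by linarith

lemma norm_g_DPO_le:
  assumes "\<forall>x y. norm (\<phi> y x) \<le> \<Phi>" and "\<beta> \<ge> 0"
  shows "norm (g_DPO \<phi> \<theta>ref \<beta> \<theta> x yw yl) \<le> 2 * \<beta> * \<Phi>"
proof -
  define s where "s = sigmoid (h_beta \<phi> \<theta>ref \<beta> \<theta> x yw yl)"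
  have s: "0 < s" "s < 1"
    unfolding s_def by (auto simp: sigmoid_pos sigmoid_less_1)
  have "norm (\<phi> yw x - \<phi> yl x) \<le> 2 * \<Phi>"
    using norm_triangle_ineq4[of "\<phi> yw x" "\<phi> yl x"] assms(1)[rule_format, of yw x]
      assms(1)[rule_format, of yl x] by linarith
  then have "(1 - s) * \<beta> * norm (\<phi> yw x - \<phi> yl x) \<le> 1 * \<beta> * (2 * \<Phi>)"
    using s assms(2) by (intro mult_mono) auto
  then show ?thesis
    unfolding g_DPO_eq s_def[symmetric] using s assms(2) by (simp add: abs_mult)
qed

text \<open>Follows from the convexity of exp between the points 0 and z - z'.\<close>
lemma ln_sigmoid_le_tangent:
  "ln (sigmoid z') \<le> ln (sigmoid z) + (1 - sigmoid z) * (z' - z)"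
proof -
  define q where "q = exp (- z) / (1 + exp (- z))"
  have e: "1 + exp (- z) > 0" "1 + exp (- z') > 0" by (simp_all add: add_pos_pos)
  have q: "0 \<le> q" "q \<le> 1" "1 - sigmoid z = q"
    unfolding q_def sigmoid_def using e by (auto simp: field_simps)
  have "exp ((1 - q) *\<^sub>R 0 + q *\<^sub>R (z - z')) \<le> (1 - q) * exp 0 + q * exp (z - z')"
    using q by (intro convex_onD[OF exp_convex]) auto
  also have "\<dots> = (1 + exp (- z')) / (1 + exp (- z))"
    using e unfolding q_def by (simp add: field_simps flip: exp_add)
  finally have "q * (z - z') \<le> ln ((1 + exp (- z')) / (1 + exp (- z)))"
    using e by (simp add: ln_ge_iff)
  also have "\<dots> = ln (sigmoid z) - ln (sigmoid z')"
    unfolding sigmoid_def using e by (simp add: ln_div)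
  finally show ?thesis unfolding q(3) by (simp add: algebra_simps)
qed

lemma DPO_loss_subgradient:
  "ln (sigmoid (h_beta \<phi> \<theta>ref \<beta> u x yw yl)) - ln (sigmoid (h_beta \<phi> \<theta>ref \<beta> \<theta> x yw yl))
     \<le> g_DPO \<phi> \<theta>ref \<beta> \<theta> x yw yl \<bullet> (\<theta> - u)"
proof -
  have "g_DPO \<phi> \<theta>ref \<beta> \<theta> x yw yl \<bullet> (\<theta> - u)
      = (1 - sigmoid (h_beta \<phi> \<theta>ref \<beta> \<theta> x yw yl))
        * (h_beta \<phi> \<theta>ref \<beta> u x yw yl - h_beta \<phi> \<theta>ref \<beta> \<theta> x yw yl)"
    unfolding g_DPO_eq by (simp add: h_beta_eq inner_diff_left inner_diff_right inner_commute algebra_simps)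
  then show ?thesis
    using ln_sigmoid_le_tangent[of "h_beta \<phi> \<theta>ref \<beta> u x yw yl" "h_beta \<phi> \<theta>ref \<beta> \<theta> x yw yl"]
    by linarith
qed

text \<open>Jensen's inequality for exp under the softmax distribution at \<theta>.\<close>
lemma SFT_loss_subgradient:
  "ln (policy \<phi> u y x) - ln (policy \<phi> \<theta> y x) \<le> g_SFT \<phi> \<theta> x y \<bullet> (\<theta> - u)"
proof -
  let ?p = "\<lambda>y'. policy \<phi> \<theta> y' x"
  have "exp (\<Sum>y'\<in>UNIV. ?p y' *\<^sub>R ((u - \<theta>) \<bullet> \<phi> y' x)) \<le> (\<Sum>y'\<in>UNIV. ?p y' * exp ((u - \<theta>) \<bullet> \<phi> y' x))"
    by (intro convex_on_sum[OF _ _ exp_convex] sum_policy) (auto intro: less_imp_le policy_pos)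
  also have "\<dots> = softmax_denom \<phi> u x / softmax_denom \<phi> \<theta> x"
    unfolding softmax_denom_def sum_divide_distrib policy_def
    by (intro sum.cong) (auto simp: inner_diff_left exp_diff)
  also have "(\<Sum>y'\<in>UNIV. ?p y' *\<^sub>R ((u - \<theta>) \<bullet> \<phi> y' x)) = mean_feature \<phi> \<theta> x \<bullet> (u - \<theta>)"
    unfolding mean_feature_def inner_sum_left by (simp add: inner_commute)
  finally have "mean_feature \<phi> \<theta> x \<bullet> (u - \<theta>) \<le> ln (softmax_denom \<phi> u x / softmax_denom \<phi> \<theta> x)"
    using softmax_denom_pos[of \<phi> _ x] by (simp add: ln_ge_iff)
  then have "mean_feature \<phi> \<theta> x \<bullet> (u - \<theta>) \<le> ln (softmax_denom \<phi> u x) - ln (softmax_denom \<phi> \<theta> x)"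
    using softmax_denom_pos[of \<phi> u x] softmax_denom_pos[of \<phi> \<theta> x] by (simp add: ln_div)
  then show ?thesis
    unfolding g_SFT_eq ln_policy by (simp add: inner_diff_left inner_diff_right inner_commute algebra_simps)
qed

section \<open>Last-iterate bound for projected stochastic gradient descent\<close>

text \<open>Averaging the last k + 2 values instead of the last k + 1 raises the average by at most
  c / (k + 1); hence the last value exceeds the suffix averages by at most c times a harmonic number.\<close>
lemma last_le_suffix_average:
  fixes v :: "nat \<Rightarrow> real"
  assumes suffix_gap: "\<And>s m. (\<Sum>i<m. v (s + i) - v s) \<le> m * c"
  shows "k \<le> N \<Longrightarrow> v N \<le> (\<Sum>i<Suc k. v (N - k + i)) / Suc k + c * harm k"
proof (induction k)
  case 0
  then show ?case by (simp add: harm_def)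
next
  case (Suc k)
  define s where "s = N - Suc k"
  define A where "A = (\<Sum>i<Suc k. v (Suc s + i))"
  have IH: "v N \<le> A / Suc k + c * harm k"
    using Suc unfolding A_def s_def by (simp add: Suc_diff_Suc)
  have sum_Suc: "(\<Sum>i<Suc (Suc k). v (s + i)) = v s + A"
    unfolding A_def by (subst sum.lessThan_Suc_shift) simp
  have gap: "A - Suc k * v s \<le> Suc (Suc k) * c"
    using suffix_gap[of s "Suc (Suc k)"] sum_Suc by (simp add: sum_subtractf algebra_simps)
  have "A / Suc k - (v s + A) / Suc (Suc k) = (A - Suc k * v s) / (real (Suc (Suc k)) * Suc k)"
    by (simp add: field_simps)
  also have "\<dots> \<le> (Suc (Suc k) * c) / (real (Suc (Suc k)) * Suc k)"
    using gap by (intro divide_right_mono) auto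
  also have "\<dots> = c / Suc k"
    by (rule mult_divide_mult_cancel_left) simp
  finally have "A / Suc k - (v s + A) / Suc (Suc k) \<le> c / Suc k" .
  moreover have "harm (Suc k) = harm k + 1 / Suc k"
    by (simp add: harm_Suc inverse_eq_divide)
  ultimately have "v N \<le> (v s + A) / Suc (Suc k) + c * harm (Suc k)"
    using IH by (simp add: algebra_simps)
  then show ?case
    using sum_Suc by (simp add: s_def)
qed

lemma expectation_bind_pmf_finite:
  fixes h :: "'b \<Rightarrow> real"
  assumes "finite (set_pmf p)" and "\<And>x. x \<in> set_pmf p \<Longrightarrow> finite (set_pmf (f x))"
  shows "measure_pmf.expectation (bind_pmf p f) h
       = measure_pmf.expectation p (\<lambda>x. measure_pmf.expectation (f x) h)"
proof -
  have "measure_pmf.expectation (bind_pmf p f) h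
      = (\<Sum>a\<in>set_pmf p. pmf p a *\<^sub>R measure_pmf.expectation (f a) h)"
    using assms by (intro pmf_expectation_bind) auto
  also have "\<dots> = measure_pmf.expectation p (\<lambda>x. measure_pmf.expectation (f x) h)"
    using assms by (intro integral_measure_pmf[symmetric]) auto
  finally show ?thesis .
qed

primrec iterate_pmf :: "('a \<Rightarrow> 'a pmf) \<Rightarrow> nat \<Rightarrow> 'a \<Rightarrow> 'a pmf" where
  "iterate_pmf K 0 = return_pmf"
| "iterate_pmf K (Suc n) = (\<lambda>\<theta>. bind_pmf (K \<theta>) (iterate_pmf K n))"

lemma iterate_pmf_add: "iterate_pmf K (m + n) \<theta> = bind_pmf (iterate_pmf K m \<theta>) (iterate_pmf K n)"
proof (induction m arbitrary: \<theta>)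
  case 0
  then show ?case by (simp add: bind_return_pmf)
next
  case (Suc m)
  then have "iterate_pmf K (m + n) = (\<lambda>\<theta>. bind_pmf (iterate_pmf K m \<theta>) (iterate_pmf K n))"
    by blast
  then show ?case by (simp add: bind_assoc_pmf)
qed

lemma iterate_pmf_Suc': "iterate_pmf K (Suc n) \<theta> = bind_pmf (iterate_pmf K n \<theta>) K"
  using iterate_pmf_add[of K n 1 \<theta>] by (simp add: bind_return_pmf')

lemma finite_set_pmf_iterate:
  assumes "\<And>\<theta>. finite (set_pmf (K \<theta>))"
  shows "finite (set_pmf (iterate_pmf K n \<theta>))"
  using assms by (induction n arbitrary: \<theta>) auto

lemma set_pmf_iterate_subset:
  assumes "\<And>\<theta>. \<theta> \<in> S \<Longrightarrow> set_pmf (K \<theta>) \<subseteq> S" and "\<theta> \<in> S"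
  shows "set_pmf (iterate_pmf K n \<theta>) \<subseteq> S"
  using assms(2)
proof (induction n arbitrary: \<theta>)
  case (Suc n)
  then show ?case using assms(1) by fastforce
qed simp

locale expected_descent_kernel =
  fixes K :: "'a::real_inner \<Rightarrow> 'a pmf" and \<Theta> :: "'a set" and F :: "'a \<Rightarrow> real" and \<eta> G :: real
  assumes finite_set_pmf_K: "\<And>\<theta>. finite (set_pmf (K \<theta>))"
    and set_pmf_K_subset: "\<And>\<theta>. \<theta> \<in> \<Theta> \<Longrightarrow> set_pmf (K \<theta>) \<subseteq> \<Theta>"
    and step_size_pos: "\<eta> > 0"
    and expected_descent: "\<And>\<theta> u. \<theta> \<in> \<Theta> \<Longrightarrow> u \<in> \<Theta> \<Longrightarrow>
      measure_pmf.expectation (K \<theta>) (\<lambda>z. (norm (z - u))\<^sup>2)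
        \<le> (norm (\<theta> - u))\<^sup>2 - 2 * \<eta> * (F \<theta> - F u) + \<eta>\<^sup>2 * G\<^sup>2"
begin

lemma finite_set_pmf_iterate_K: "finite (set_pmf (iterate_pmf K n \<theta>))"
  using finite_set_pmf_K by (rule finite_set_pmf_iterate)

lemma integrable_iterate_K: "integrable (measure_pmf (iterate_pmf K n \<theta>)) (f :: 'a \<Rightarrow> real)"
  using finite_set_pmf_iterate_K by (rule integrable_measure_pmf_finite)

lemma set_pmf_iterate_K_subset: "\<theta> \<in> \<Theta> \<Longrightarrow> set_pmf (iterate_pmf K n \<theta>) \<subseteq> \<Theta>"
  using set_pmf_K_subset by (rule set_pmf_iterate_subset)

lemma expectation_iterate_Suc:
  "measure_pmf.expectation (iterate_pmf K (Suc n) \<theta>) (f :: 'a \<Rightarrow> real)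
     = measure_pmf.expectation (iterate_pmf K n \<theta>) (\<lambda>z. measure_pmf.expectation (K z) f)"
  unfolding iterate_pmf_Suc' using finite_set_pmf_iterate_K finite_set_pmf_K
  by (rule expectation_bind_pmf_finite)

lemma expectation_iterate_add:
  "measure_pmf.expectation (iterate_pmf K (m + n) \<theta>) (f :: 'a \<Rightarrow> real)
     = measure_pmf.expectation (iterate_pmf K m \<theta>) (\<lambda>z. measure_pmf.expectation (iterate_pmf K n z) f)"
  unfolding iterate_pmf_add using finite_set_pmf_iterate_K finite_set_pmf_iterate_K
  by (rule expectation_bind_pmf_finite)

lemma sum_gap_plus_distance_le:
  assumes "\<theta> \<in> \<Theta>" and "u \<in> \<Theta>"
  shows "2 * \<eta> * (\<Sum>i<m. measure_pmf.expectation (iterate_pmf K i \<theta>) F - F u)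
           + measure_pmf.expectation (iterate_pmf K m \<theta>) (\<lambda>z. (norm (z - u))\<^sup>2)
         \<le> (norm (\<theta> - u))\<^sup>2 + m * (\<eta>\<^sup>2 * G\<^sup>2)"
proof (induction m)
  case 0
  then show ?case by simp
next
  case (Suc m)
  let ?E = "measure_pmf.expectation (iterate_pmf K m \<theta>)"
  have "measure_pmf.expectation (iterate_pmf K (Suc m) \<theta>) (\<lambda>z. (norm (z - u))\<^sup>2)
      \<le> ?E (\<lambda>z. (norm (z - u))\<^sup>2 - 2 * \<eta> * (F z - F u) + \<eta>\<^sup>2 * G\<^sup>2)"
    unfolding expectation_iterate_Suc
    using set_pmf_iterate_K_subset[OF assms(1)] expected_descent[OF _ assms(2)]
    by (intro integral_mono_AE integrable_iterate_K AE_pmfI) auto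
  also have "\<dots> = ?E (\<lambda>z. (norm (z - u))\<^sup>2) - 2 * \<eta> * (?E F - F u) + \<eta>\<^sup>2 * G\<^sup>2"
    by (simp add: integrable_iterate_K algebra_simps)
  finally show ?case
    using Suc.IH by (simp add: algebra_simps)
qed

lemma sum_gap_le:
  assumes "\<theta> \<in> \<Theta>" and "u \<in> \<Theta>"
  shows "(\<Sum>i<m. measure_pmf.expectation (iterate_pmf K i \<theta>) F - F u)
           \<le> (norm (\<theta> - u))\<^sup>2 / (2 * \<eta>) + m * (\<eta> * G\<^sup>2 / 2)"
proof -
  have "measure_pmf.expectation (iterate_pmf K m \<theta>) (\<lambda>z. (norm (z - u))\<^sup>2) \<ge> 0"
    by (intro integral_nonneg_AE) auto
  then have "2 * \<eta> * (\<Sum>i<m. measure_pmf.expectation (iterate_pmf K i \<theta>) F - F u)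
      \<le> (norm (\<theta> - u))\<^sup>2 + m * (\<eta>\<^sup>2 * G\<^sup>2)"
    using sum_gap_plus_distance_le[OF assms, of m] by linarith
  then show ?thesis
    using step_size_pos by (simp add: field_simps power2_eq_square)
qed

text \<open>Restarting the chain at the iterate after s steps and comparing with u = its starting point.\<close>
lemma sum_suffix_gap_le:
  assumes "\<theta> \<in> \<Theta>"
  shows "(\<Sum>i<m. measure_pmf.expectation (iterate_pmf K (s + i) \<theta>) F
                - measure_pmf.expectation (iterate_pmf K s \<theta>) F)
           \<le> m * (\<eta> * G\<^sup>2 / 2)"
proof -
  have "(\<Sum>i<m. measure_pmf.expectation (iterate_pmf K (s + i) \<theta>) F
              - measure_pmf.expectation (iterate_pmf K s \<theta>) F)
      = measure_pmf.expectation (iterate_pmf K s \<theta>)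
          (\<lambda>z. \<Sum>i<m. measure_pmf.expectation (iterate_pmf K i z) F - F z)"
    by (simp add: expectation_iterate_add integrable_iterate_K integral_sum integral_diff)
  also have "\<dots> \<le> measure_pmf.expectation (iterate_pmf K s \<theta>) (\<lambda>z. m * (\<eta> * G\<^sup>2 / 2))"
    using set_pmf_iterate_K_subset[OF assms] sum_gap_le[of z z m for z]
    by (intro integral_mono_AE integrable_iterate_K AE_pmfI) auto
  finally show ?thesis by simp
qed

theorem last_iterate_gap_le:
  assumes "\<theta> \<in> \<Theta>" and "u \<in> \<Theta>"
  shows "measure_pmf.expectation (iterate_pmf K N \<theta>) (\<lambda>z. F z - F u)
           \<le> (norm (\<theta> - u))\<^sup>2 / (2 * \<eta> * Suc N) + \<eta> * G\<^sup>2 / 2 * (1 + harm N)"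
proof -
  define v where "v i = measure_pmf.expectation (iterate_pmf K i \<theta>) F" for i
  define c where "c = \<eta> * G\<^sup>2 / 2"
  have last: "v N \<le> (\<Sum>i<Suc N. v i) / Suc N + c * harm N"
    using last_le_suffix_average[of v c N N] sum_suffix_gap_le[OF assms(1)]
    unfolding v_def c_def by simp
  have "(\<Sum>i<Suc N. v i) \<le> Suc N * F u + (norm (\<theta> - u))\<^sup>2 / (2 * \<eta>) + Suc N * c"
    using sum_gap_le[OF assms, of "Suc N"] unfolding v_def c_def by (simp add: sum_subtractf)
  then have "(\<Sum>i<Suc N. v i) / Suc N
      \<le> (Suc N * F u + (norm (\<theta> - u))\<^sup>2 / (2 * \<eta>) + Suc N * c) / Suc N"
    by (intro divide_right_mono) auto
  also have "\<dots> = F u + (norm (\<theta> - u))\<^sup>2 / (2 * \<eta> * Suc N) + c"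
    using step_size_pos by (simp add: field_simps del: of_nat_Suc)
  finally have "(\<Sum>i<Suc N. v i) / Suc N \<le> F u + (norm (\<theta> - u))\<^sup>2 / (2 * \<eta> * Suc N) + c" .
  moreover have "measure_pmf.expectation (iterate_pmf K N \<theta>) (\<lambda>z. F z - F u) = v N - F u"
    unfolding v_def by (simp add: integrable_iterate_K)
  ultimately show ?thesis
    using last unfolding c_def[symmetric] distrib_left mult_1_right by linarith
qed

end

section \<open>ALRIGHT as projected stochastic gradient descent\<close>

lemma sq_dist_projected_step_le:
  fixes S :: "'a::euclidean_space set"
  assumes "closed S" and "convex S" and "u \<in> S" and "norm g \<le> G" and "\<eta> \<ge> 0"
  shows "(norm (closest_point S (\<theta> - \<eta> *\<^sub>R g) - u))\<^sup>2
           \<le> (norm (\<theta> - u))\<^sup>2 - 2 * \<eta> * (g \<bullet> (\<theta> - u)) + \<eta>\<^sup>2 * G\<^sup>2"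
proof -
  have "dist (closest_point S (\<theta> - \<eta> *\<^sub>R g)) (closest_point S u) \<le> dist (\<theta> - \<eta> *\<^sub>R g) u"
    using assms(1-3) by (intro closest_point_lipschitz) auto
  then have "norm (closest_point S (\<theta> - \<eta> *\<^sub>R g) - u) \<le> norm ((\<theta> - u) - \<eta> *\<^sub>R g)"
    using closest_point_self[OF assms(3)] by (simp add: dist_norm algebra_simps)
  then have "(norm (closest_point S (\<theta> - \<eta> *\<^sub>R g) - u))\<^sup>2 \<le> (norm ((\<theta> - u) - \<eta> *\<^sub>R g))\<^sup>2"
    by (intro power_mono) auto
  also have "\<dots> = (norm (\<theta> - u))\<^sup>2 - 2 * \<eta> * (g \<bullet> (\<theta> - u)) + \<eta>\<^sup>2 * (norm g)\<^sup>2"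
    unfolding power2_norm_eq_inner
    by (simp add: inner_diff_left inner_diff_right inner_commute algebra_simps power2_eq_square)
  also have "\<eta>\<^sup>2 * (norm g)\<^sup>2 \<le> \<eta>\<^sup>2 * G\<^sup>2"
    using assms(4) by (intro mult_left_mono power_mono) auto
  finally show ?thesis by simp
qed

lemma mean_le_of_pointwise_gap:
  fixes X L L' :: "nat \<Rightarrow> real"
  assumes "n > 0" and "\<And>k. k < n \<Longrightarrow> X k \<le> A - b * (L k - L' k)"
  shows "(\<Sum>k<n. X k) / n \<le> A - b * ((\<Sum>k<n. L k) / n - (\<Sum>k<n. L' k) / n)"
proof -
  have "(\<Sum>k<n. X k) \<le> (\<Sum>k<n. A - b * (L k - L' k))"
    using assms(2) by (intro sum_mono) auto
  also have "\<dots> = n * A - b * (\<Sum>k<n. L k) + b * (\<Sum>k<n. L' k)"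
    by (simp add: sum.distrib sum_subtractf sum_distrib_left algebra_simps)
  finally show ?thesis
    using assms(1) by (simp add: field_simps)
qed

lemma alright_iter_eq_iterate_pmf:
  "alright_iter \<phi> \<theta>ref \<beta> \<Theta> D1 D2 lam \<alpha> n = iterate_pmf (alright_step \<phi> \<theta>ref \<beta> \<Theta> D1 D2 lam \<alpha>) n"
  by (induction n) auto

context
  fixes \<phi> :: "'y::finite \<Rightarrow> 'x \<Rightarrow> 'a::euclidean_space" and \<theta>ref :: 'a and \<beta> :: real
    and \<Theta> :: "'a set" and D1 :: "('x \<times> 'y \<times> 'y) list" and D2 :: "('x \<times> 'y) list" and \<eta> :: real
begin

definition dpo_update :: "'a \<Rightarrow> nat \<Rightarrow> 'a" where
  "dpo_update \<theta> k = (case D1 ! k of (x, yw, yl) \<Rightarrow>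
     closest_point \<Theta> (\<theta> - \<eta> *\<^sub>R g_DPO \<phi> \<theta>ref \<beta> \<theta> x yw yl))"

definition sft_update :: "'a \<Rightarrow> nat \<Rightarrow> 'a" where
  "sft_update \<theta> k = (case D2 ! k of (x, y) \<Rightarrow> closest_point \<Theta> (\<theta> - \<eta> *\<^sub>R g_SFT \<phi> \<theta> x y))"

definition dpo_loss :: "'a \<Rightarrow> nat \<Rightarrow> real" where
  "dpo_loss \<theta> k = (case D1 ! k of (x, yw, yl) \<Rightarrow> - ln (sigmoid (h_beta \<phi> \<theta>ref \<beta> \<theta> x yw yl)))"

definition sft_loss :: "'a \<Rightarrow> nat \<Rightarrow> real" where
  "sft_loss \<theta> k = (case D2 ! k of (x, y) \<Rightarrow> - ln (policy \<phi> \<theta> y x))"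

lemma f_DPO_eq_mean: "f_DPO \<phi> \<theta>ref \<beta> D1 \<theta> = (\<Sum>k<length D1. dpo_loss \<theta> k) / length D1"
  unfolding f_DPO_def dpo_loss_def by (simp add: split_def sum_negf)

lemma f_SFT_eq_mean: "f_SFT \<phi> D2 \<theta> = (\<Sum>k<length D2. sft_loss \<theta> k) / length D2"
  unfolding f_SFT_def sft_loss_def by (simp add: split_def sum_negf)

lemma alright_step_eq:
  "alright_step \<phi> \<theta>ref \<beta> \<Theta> D1 D2 lam \<eta> \<theta>
     = bind_pmf (bernoulli_pmf lam) (\<lambda>i. if i then map_pmf (dpo_update \<theta>) (pmf_of_set {..<length D1})
                                          else map_pmf (sft_update \<theta>) (pmf_of_set {..<length D2}))"
  unfolding alright_step_def dpo_update_def sft_update_def ..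

context
  assumes D: "D1 \<noteq> []" "D2 \<noteq> []"
begin

lemma set_pmf_alright_step:
  "set_pmf (alright_step \<phi> \<theta>ref \<beta> \<Theta> D1 D2 lam \<eta> \<theta>)
     \<subseteq> dpo_update \<theta> ` {..<length D1} \<union> sft_update \<theta> ` {..<length D2}"
  using D unfolding alright_step_eq by (auto simp: set_pmf_of_set lessThan_empty_iff split: if_splits)

lemma expectation_alright_step:
  assumes "0 \<le> lam" and "lam \<le> 1"
  shows "measure_pmf.expectation (alright_step \<phi> \<theta>ref \<beta> \<Theta> D1 D2 lam \<eta> \<theta>) h
    = lam * ((\<Sum>k<length D1. h (dpo_update \<theta> k)) / length D1)
      + (1 - lam) * ((\<Sum>k<length D2. h (sft_update \<theta> k)) / length D2)"
proof -
  have "measure_pmf.expectation (alright_step \<phi> \<theta>ref \<beta> \<Theta> D1 D2 lam \<eta> \<theta>) h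
      = measure_pmf.expectation (bernoulli_pmf lam)
          (\<lambda>i. measure_pmf.expectation (if i then map_pmf (dpo_update \<theta>) (pmf_of_set {..<length D1})
                                         else map_pmf (sft_update \<theta>) (pmf_of_set {..<length D2})) h)"
    unfolding alright_step_eq using D
    by (intro expectation_bind_pmf_finite) (auto simp: set_pmf_of_set lessThan_empty_iff)
  then show ?thesis
    using assms D by (simp add: integral_pmf_of_set lessThan_empty_iff mult_ac)
qed

end

context
  assumes \<Theta>: "closed \<Theta>" "convex \<Theta>" "\<Theta> \<noteq> {}"
begin

lemma dpo_update_in: "dpo_update \<theta> k \<in> \<Theta>"
  unfolding dpo_update_def using closest_point_in_set[OF \<Theta>(1,3)] by (auto split: prod.splits)

lemma sft_update_in: "sft_update \<theta> k \<in> \<Theta>"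
  unfolding sft_update_def using closest_point_in_set[OF \<Theta>(1,3)] by (auto split: prod.splits)

context
  fixes G :: real
  assumes step_size_nonneg: "\<eta> \<ge> 0"
    and norm_g_DPO: "\<And>\<theta> x yw yl. norm (g_DPO \<phi> \<theta>ref \<beta> \<theta> x yw yl) \<le> G"
    and norm_g_SFT: "\<And>\<theta> x y. norm (g_SFT \<phi> \<theta> x y) \<le> G"
begin

lemma sq_dist_dpo_update_le:
  assumes "u \<in> \<Theta>"
  shows "(norm (dpo_update \<theta> k - u))\<^sup>2
           \<le> (norm (\<theta> - u))\<^sup>2 - 2 * \<eta> * (dpo_loss \<theta> k - dpo_loss u k) + \<eta>\<^sup>2 * G\<^sup>2"
proof -
  obtain x yw yl where k: "D1 ! k = (x, yw, yl)"
    by (cases "D1 ! k") auto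
  have "2 * \<eta> * (dpo_loss \<theta> k - dpo_loss u k) \<le> 2 * \<eta> * (g_DPO \<phi> \<theta>ref \<beta> \<theta> x yw yl \<bullet> (\<theta> - u))"
    unfolding dpo_loss_def k using DPO_loss_subgradient step_size_nonneg
    by (intro mult_left_mono) auto
  moreover have "(norm (closest_point \<Theta> (\<theta> - \<eta> *\<^sub>R g_DPO \<phi> \<theta>ref \<beta> \<theta> x yw yl) - u))\<^sup>2
      \<le> (norm (\<theta> - u))\<^sup>2 - 2 * \<eta> * (g_DPO \<phi> \<theta>ref \<beta> \<theta> x yw yl \<bullet> (\<theta> - u)) + \<eta>\<^sup>2 * G\<^sup>2"
    using \<Theta>(1,2) assms norm_g_DPO step_size_nonneg by (rule sq_dist_projected_step_le)
  ultimately show ?thesis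
    unfolding dpo_update_def k prod.case by linarith
qed

lemma sq_dist_sft_update_le:
  assumes "u \<in> \<Theta>"
  shows "(norm (sft_update \<theta> k - u))\<^sup>2
           \<le> (norm (\<theta> - u))\<^sup>2 - 2 * \<eta> * (sft_loss \<theta> k - sft_loss u k) + \<eta>\<^sup>2 * G\<^sup>2"
proof -
  obtain x y where k: "D2 ! k = (x, y)"
    by (cases "D2 ! k") auto
  have "2 * \<eta> * (sft_loss \<theta> k - sft_loss u k) \<le> 2 * \<eta> * (g_SFT \<phi> \<theta> x y \<bullet> (\<theta> - u))"
    unfolding sft_loss_def k using SFT_loss_subgradient step_size_nonneg
    by (intro mult_left_mono) auto
  moreover have "(norm (closest_point \<Theta> (\<theta> - \<eta> *\<^sub>R g_SFT \<phi> \<theta> x y) - u))\<^sup>2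
      \<le> (norm (\<theta> - u))\<^sup>2 - 2 * \<eta> * (g_SFT \<phi> \<theta> x y \<bullet> (\<theta> - u)) + \<eta>\<^sup>2 * G\<^sup>2"
    using \<Theta>(1,2) assms norm_g_SFT step_size_nonneg by (rule sq_dist_projected_step_le)
  ultimately show ?thesis
    unfolding sft_update_def k prod.case by linarith
qed

lemma alright_expected_descent:
  assumes "D1 \<noteq> []" and "D2 \<noteq> []" and "0 \<le> lam" and "lam \<le> 1" and "u \<in> \<Theta>"
  defines "F \<equiv> \<lambda>\<theta>. lam * f_DPO \<phi> \<theta>ref \<beta> D1 \<theta> + (1 - lam) * f_SFT \<phi> D2 \<theta>"
  shows "measure_pmf.expectation (alright_step \<phi> \<theta>ref \<beta> \<Theta> D1 D2 lam \<eta> \<theta>) (\<lambda>z. (norm (z - u))\<^sup>2)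
           \<le> (norm (\<theta> - u))\<^sup>2 - 2 * \<eta> * (F \<theta> - F u) + \<eta>\<^sup>2 * G\<^sup>2"
proof -
  let ?A = "(norm (\<theta> - u))\<^sup>2 + \<eta>\<^sup>2 * G\<^sup>2"
  have "(\<Sum>k<length D1. (norm (dpo_update \<theta> k - u))\<^sup>2) / length D1
      \<le> ?A - 2 * \<eta> * (f_DPO \<phi> \<theta>ref \<beta> D1 \<theta> - f_DPO \<phi> \<theta>ref \<beta> D1 u)"
    unfolding f_DPO_eq_mean using assms(1) sq_dist_dpo_update_le[OF assms(5)]
    by (intro mean_le_of_pointwise_gap) (auto simp: algebra_simps)
  moreover have "(\<Sum>k<length D2. (norm (sft_update \<theta> k - u))\<^sup>2) / length D2
      \<le> ?A - 2 * \<eta> * (f_SFT \<phi> D2 \<theta> - f_SFT \<phi> D2 u)"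
    unfolding f_SFT_eq_mean using assms(2) sq_dist_sft_update_le[OF assms(5)]
    by (intro mean_le_of_pointwise_gap) (auto simp: algebra_simps)
  ultimately have "measure_pmf.expectation (alright_step \<phi> \<theta>ref \<beta> \<Theta> D1 D2 lam \<eta> \<theta>) (\<lambda>z. (norm (z - u))\<^sup>2)
      \<le> lam * (?A - 2 * \<eta> * (f_DPO \<phi> \<theta>ref \<beta> D1 \<theta> - f_DPO \<phi> \<theta>ref \<beta> D1 u))
        + (1 - lam) * (?A - 2 * \<eta> * (f_SFT \<phi> D2 \<theta> - f_SFT \<phi> D2 u))"
    unfolding expectation_alright_step[OF assms(1-4)] using assms(3,4)
    by (intro add_mono mult_left_mono) auto
  then show ?thesis
    unfolding F_def by (simp add: algebra_simps)
qed

end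

end

end

lemma expected_descent_kernel_alright:
  fixes \<phi> :: "'y::finite \<Rightarrow> 'x \<Rightarrow> 'a::euclidean_space"
  assumes "closed \<Theta>" and "convex \<Theta>" and "\<Theta> \<noteq> {}" and "D1 \<noteq> []" and "D2 \<noteq> []"
    and "0 \<le> lam" and "lam \<le> 1" and "\<beta> \<ge> 0" and "\<forall>x y. norm (\<phi> y x) \<le> \<Phi>" and "\<eta> > 0"
  shows "expected_descent_kernel (alright_step \<phi> \<theta>ref \<beta> \<Theta> D1 D2 lam \<eta>) \<Theta>
           (\<lambda>\<theta>. lam * f_DPO \<phi> \<theta>ref \<beta> D1 \<theta> + (1 - lam) * f_SFT \<phi> D2 \<theta>) \<eta> (2 * \<Phi> * max 1 \<beta>)"
proof
  have "\<Phi> \<ge> 0"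
    using assms(9) norm_ge_zero order_trans by blast
  have G_DPO: "norm (g_DPO \<phi> \<theta>ref \<beta> \<theta> x yw yl) \<le> 2 * \<Phi> * max 1 \<beta>" for \<theta> x yw yl
  proof -
    have "norm (g_DPO \<phi> \<theta>ref \<beta> \<theta> x yw yl) \<le> 2 * \<beta> * \<Phi>"
      using assms(9,8) by (rule norm_g_DPO_le)
    also have "\<dots> = 2 * \<Phi> * \<beta>"
      by simp
    also have "\<dots> \<le> 2 * \<Phi> * max 1 \<beta>"
      using \<open>\<Phi> \<ge> 0\<close> by (intro mult_left_mono) auto
    finally show ?thesis .
  qed
  have G_SFT: "norm (g_SFT \<phi> \<theta> x y) \<le> 2 * \<Phi> * max 1 \<beta>" for \<theta> x y
  proof -
    have "norm (g_SFT \<phi> \<theta> x y) \<le> 2 * \<Phi> * 1"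
      using assms(9) by (simp add: norm_g_SFT_le)
    also have "\<dots> \<le> 2 * \<Phi> * max 1 \<beta>"
      using \<open>\<Phi> \<ge> 0\<close> by (intro mult_left_mono) auto
    finally show ?thesis .
  qed
  show "measure_pmf.expectation (alright_step \<phi> \<theta>ref \<beta> \<Theta> D1 D2 lam \<eta> \<theta>) (\<lambda>z. (norm (z - u))\<^sup>2)
        \<le> (norm (\<theta> - u))\<^sup>2
           - 2 * \<eta> * ((lam * f_DPO \<phi> \<theta>ref \<beta> D1 \<theta> + (1 - lam) * f_SFT \<phi> D2 \<theta>)
                      - (lam * f_DPO \<phi> \<theta>ref \<beta> D1 u + (1 - lam) * f_SFT \<phi> D2 u))
           + \<eta>\<^sup>2 * (2 * \<Phi> * max 1 \<beta>)\<^sup>2" if "u \<in> \<Theta>" for \<theta> u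
    using alright_expected_descent[OF assms(1-3) less_imp_le[OF assms(10)] G_DPO G_SFT assms(4-7) that] .
  show "finite (set_pmf (alright_step \<phi> \<theta>ref \<beta> \<Theta> D1 D2 lam \<eta> \<theta>))" for \<theta>
    using set_pmf_alright_step[OF assms(4,5)] by (rule finite_subset) auto
  show "set_pmf (alright_step \<phi> \<theta>ref \<beta> \<Theta> D1 D2 lam \<eta> \<theta>) \<subseteq> \<Theta>" for \<theta>
    using set_pmf_alright_step[OF assms(4,5)] dpo_update_in[OF assms(1-3)] sft_update_in[OF assms(1-3)]
    by blast
qed (fact assms)

lemma sqrt_step_size_rate_le:
  fixes T :: nat and R c \<alpha>0 \<eta> :: real
  assumes "T \<ge> 3" and "\<alpha>0 > 0" and "R \<ge> 0" and "c \<ge> 0" and \<eta>: "\<eta> = \<alpha>0 / sqrt T"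
  shows "R / (2 * \<eta> * T) + \<eta> * c * (1 + harm (T - 1))
           \<le> (R / (2 * \<alpha>0) + 3 * \<alpha>0 * c) * (ln T / sqrt T)"
proof -
  define s where "s = sqrt T"
  have s: "s > 0" "s * s = T"
    unfolding s_def using assms(1) by auto
  have ln_T: "ln T \<ge> 1"
    using assms(1) exp_le by (subst ln_ge_iff) auto
  have "harm (T - 1) - ln (real (T - 1)) \<le> harm 1 - ln (real 1)"
    using assms(1) by (intro euler_mascheroni_sequence_decreasing) auto
  moreover have "ln (real (T - 1)) \<le> ln T"
    using assms(1) by (subst ln_le_cancel_iff) auto
  ultimately have harm_T: "1 + harm (T - 1) \<le> 3 * ln T"
    using ln_T by (simp add: harm_def)
  have "R / (2 * \<eta> * T) = R / (2 * \<alpha>0) * (1 / s)"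
    unfolding \<eta> s_def[symmetric] using s assms(2) by (simp add: field_simps flip: s(2))
  also have "\<dots> \<le> R / (2 * \<alpha>0) * (ln T / s)"
    using s ln_T assms(2,3) by (intro mult_left_mono divide_right_mono) auto
  finally have "R / (2 * \<eta> * T) \<le> R / (2 * \<alpha>0) * (ln T / s)" .
  moreover have "\<eta> * c * (1 + harm (T - 1)) \<le> \<eta> * c * (3 * ln T)"
    using harm_T assms(2,4) s unfolding \<eta> s_def[symmetric] by (intro mult_left_mono) auto
  moreover have "\<eta> * c * (3 * ln T) = 3 * \<alpha>0 * c * (ln T / s)"
    unfolding \<eta> s_def[symmetric] by simp
  ultimately show ?thesis
    unfolding s_def by (simp add: algebra_simps)
qed

lemma alright_output_gap_le:
  fixes \<phi> :: "'y::finite \<Rightarrow> 'x \<Rightarrow> 'a::euclidean_space"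
    and \<theta>ref \<theta>1 \<theta>opt :: 'a and \<Theta> :: "'a set"
    and D1 :: "('x \<times> 'y \<times> 'y) list" and D2 :: "('x \<times> 'y) list"
    and \<beta> \<alpha>0 \<Phi> lam :: real and T :: nat
  defines "F \<equiv> \<lambda>\<theta>. lam * f_DPO \<phi> \<theta>ref \<beta> D1 \<theta> + (1 - lam) * f_SFT \<phi> D2 \<theta>"
  assumes hyps: "closed \<Theta>" "convex \<Theta>" "\<Theta> \<noteq> {}" "D1 \<noteq> []" "D2 \<noteq> []"
      "0 \<le> lam" "lam \<le> 1" "\<beta> \<ge> 0" "\<forall>x y. norm (\<phi> y x) \<le> \<Phi>" "\<alpha>0 > 0"
    and T: "T \<ge> 3" and \<theta>1: "\<theta>1 \<in> \<Theta>"
    and \<theta>opt: "\<theta>opt \<in> \<Theta>" and opt: "\<And>\<theta>. \<theta> \<in> \<Theta> \<Longrightarrow> F \<theta>opt \<le> F \<theta>"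
  shows "0 \<le> measure_pmf.expectation (alright_output \<phi> \<theta>ref \<beta> \<Theta> D1 D2 lam \<alpha>0 \<theta>1 T) (\<lambda>\<theta>. F \<theta> - F \<theta>opt)"
    and "measure_pmf.expectation (alright_output \<phi> \<theta>ref \<beta> \<Theta> D1 D2 lam \<alpha>0 \<theta>1 T) (\<lambda>\<theta>. F \<theta> - F \<theta>opt)
           \<le> ((norm (\<theta>1 - \<theta>opt))\<^sup>2 / (2 * \<alpha>0) + 3 * \<alpha>0 * ((2 * \<Phi> * max 1 \<beta>)\<^sup>2 / 2))
              * (ln T / sqrt T)"
proof -
  define \<eta> where "\<eta> = \<alpha>0 / sqrt T"
  interpret expected_descent_kernel "alright_step \<phi> \<theta>ref \<beta> \<Theta> D1 D2 lam \<eta>" \<Theta> F \<eta> "2 * \<Phi> * max 1 \<beta>"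
    unfolding F_def using hyps T by (intro expected_descent_kernel_alright) (auto simp: \<eta>_def)
  have output_eq: "alright_output \<phi> \<theta>ref \<beta> \<Theta> D1 D2 lam \<alpha>0 \<theta>1 T
      = iterate_pmf (alright_step \<phi> \<theta>ref \<beta> \<Theta> D1 D2 lam \<eta>) (T - 1) \<theta>1"
    unfolding alright_output_def alright_iter_eq_iterate_pmf \<eta>_def ..
  show "0 \<le> measure_pmf.expectation (alright_output \<phi> \<theta>ref \<beta> \<Theta> D1 D2 lam \<alpha>0 \<theta>1 T) (\<lambda>\<theta>. F \<theta> - F \<theta>opt)"
    unfolding output_eq using set_pmf_iterate_K_subset[OF \<theta>1] opt
    by (intro integral_nonneg_AE AE_pmfI) auto
  show "measure_pmf.expectation (alright_output \<phi> \<theta>ref \<beta> \<Theta> D1 D2 lam \<alpha>0 \<theta>1 T) (\<lambda>\<theta>. F \<theta> - F \<theta>opt)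
      \<le> ((norm (\<theta>1 - \<theta>opt))\<^sup>2 / (2 * \<alpha>0) + 3 * \<alpha>0 * ((2 * \<Phi> * max 1 \<beta>)\<^sup>2 / 2))
         * (ln T / sqrt T)"
    unfolding output_eq
    using last_iterate_gap_le[OF \<theta>1 \<theta>opt, of "T - 1"] T
      sqrt_step_size_rate_le[OF T \<open>\<alpha>0 > 0\<close> _ _ \<eta>_def,
        of "(norm (\<theta>1 - \<theta>opt))\<^sup>2" "(2 * \<Phi> * max 1 \<beta>)\<^sup>2 / 2"]
    by (simp add: Suc_diff_1 mult.assoc)
qed

theorem theorem4p1:
  fixes \<phi> :: "'y::finite \<Rightarrow> 'x \<Rightarrow> 'a::euclidean_space"
    and \<theta>ref \<theta>1 :: 'a and \<Theta> :: "'a set"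
    and D1 :: "('x \<times> 'y \<times> 'y) list" and D2 :: "('x \<times> 'y) list"
    and \<beta> \<alpha>0 \<Phi> lam :: real
  assumes "\<Theta> \<noteq> {}" and "closed \<Theta>" and "convex \<Theta>"
    and "\<theta>1 \<in> \<Theta>"
    and "D1 \<noteq> []" and "D2 \<noteq> []"
    and "\<beta> > 0" and "\<alpha>0 > 0"
    and "\<Phi> > 0" and "\<forall>x y. norm (\<phi> y x) \<le> \<Phi>"
    and "0 \<le> lam" and "lam \<le> 1"
    and "\<exists>\<theta>\<in>\<Theta>. \<forall>\<theta>'\<in>\<Theta>.
           lam * f_DPO \<phi> \<theta>ref \<beta> D1 \<theta> + (1 - lam) * f_SFT \<phi> D2 \<theta>
         \<le> lam * f_DPO \<phi> \<theta>ref \<beta> D1 \<theta>' + (1 - lam) * f_SFT \<phi> D2 \<theta>'"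
  shows "(\<lambda>T. measure_pmf.expectation (alright_output \<phi> \<theta>ref \<beta> \<Theta> D1 D2 lam \<alpha>0 \<theta>1 T)
               (\<lambda>\<theta>. lam * f_DPO \<phi> \<theta>ref \<beta> D1 \<theta> + (1 - lam) * f_SFT \<phi> D2 \<theta>
                   - (INF \<theta>'\<in>\<Theta>. lam * f_DPO \<phi> \<theta>ref \<beta> D1 \<theta>' + (1 - lam) * f_SFT \<phi> D2 \<theta>')))
         \<in> O(\<lambda>T. ln (real T) / sqrt (real T))"
proof -
  define F where "F \<theta> = lam * f_DPO \<phi> \<theta>ref \<beta> D1 \<theta> + (1 - lam) * f_SFT \<phi> D2 \<theta>" for \<theta>
  obtain \<theta>opt where opt: "\<theta>opt \<in> \<Theta>" "\<And>\<theta>. \<theta> \<in> \<Theta> \<Longrightarrow> F \<theta>opt \<le> F \<theta>"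
    using assms(13) unfolding F_def by blast
  have INF: "(INF \<theta>\<in>\<Theta>. F \<theta>) = F \<theta>opt"
    using opt by (intro cInf_eq_minimum) auto
  define C where "C = (norm (\<theta>1 - \<theta>opt))\<^sup>2 / (2 * \<alpha>0) + 3 * \<alpha>0 * ((2 * \<Phi> * max 1 \<beta>)\<^sup>2 / 2)"
  have "norm (measure_pmf.expectation (alright_output \<phi> \<theta>ref \<beta> \<Theta> D1 D2 lam \<alpha>0 \<theta>1 T)
          (\<lambda>\<theta>. F \<theta> - F \<theta>opt)) \<le> C * norm (ln T / sqrt T)" if "T \<ge> 3" for T
    using alright_output_gap_le[OF assms(2,3,1,5,6,11,12) less_imp_le[OF assms(7)] assms(10,8) that
        assms(4) opt(1) opt(2)[unfolded F_def]] that
    unfolding F_def C_def by simp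
  then show ?thesis
    unfolding F_def[symmetric] INF
    by (intro bigoI[where c = C] eventually_at_top_linorderI[of 3])
qed

end
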